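(* At the end of any iteration of the main loop of MAPTree, for every OR node $u\in\mathcal G'$ such that some partial solution rooted at $u$ in $\mathcal G'$ exists, $\mathrm{getSolution}(u)$ returns a minimum-cost partial solution rooted at $u$ in $\mathcal G'$.
   Context: Let $x_1,\dots,x_N\in\{0,1\}^F$ be a binary dataset $\mathcal X$ with labels $\mathcal Y\in\{0,1\}^N$, $[N]=\{1,\dots,N\}$. For $\mathcal I\subseteq[N]$, $f\in[F]$, $k\in\{0,1\}$ let $\mathcal I|_{f=k}=\{i\in\mathcal I:(x_i)_f=k\}$, $c^k(\mathcal I)=|\{i\in\mathcal I:y_i=k\}|$, $\mathcal V(\mathcal I)=\{f:\mathcal I|_{f=0}\neq\emptyset\text{ and }\mathcal I|_{f=1}\neq\emptyset\}$. Fix $\rho^1,\rho^0>0$, $\alpha\in(0,1)$, $\beta\ge0$; $\ell_{\rm leaf}(c^1,c^0)=B(c^1+\rho^1,c^0+\rho^0)/B(\rho^1,\rho^0)$ ($B$ the Beta function), $p_{\rm split}(d)=\alpha(1+d)^{-\beta}$, $p_{\rm leaf}(d,\mathcal I)=1$ if $\mathcal V(\mathcal I)=\emptyset$ else $1-p_{\rm split}(d)$, $p_{\rm inner}(d,\mathcal I)=0$ if $\mathcal V(\mathcal I)=\emptyset$ else $p_{\rm split}(d)/|\mathcal V(\mathcal I)|$; $-\log0=+\infty$, and a minimum over an empty set is $+\infty$. Graph $\mathcal G=\mathcal G_{\mathcal X,\mathcal Y}$: for nonempty $\mathcal I\subseteq[N]$, $d\in\{0,\dots,F\}$, an OR node $o_{\mathcal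 I,d}$ with terminal child $t_{\mathcal I,d}$ (edge cost $-\log p_{\rm leaf}(d,\mathcal I)-\log\ell_{\rm leaf}(c^1(\mathcal I),c^0(\mathcal I))$); for $d<F$, $f\in\mathcal V(\mathcal I)$, an AND child $a_{\mathcal I,d,f}$ (edge cost $-\log p_{\rm inner}(d,\mathcal I)$) with cost-$0$ edges to $o_{\mathcal I|_{f=0},d+1}$, $o_{\mathcal I|_{f=1},d+1}$; root $r=o_{[N],0}$; only nodes reachable from $r$ kept. A partial solution rooted at an OR node $u$ in $\mathcal G'$ is a set $\mathcal S\subseteq\mathcal G'$ containing $u$, all of whose nodes are reachable from $u$ inside $\mathcal S$, such that every AND node of $\mathcal S$ has both children in $\mathcal S$ and every OR node of $\mathcal S$ has exactly one child in $\mathcal S$; its cost is the sum of the costs of edges $v\to w$ with $v,w\in\mathcal S$. Heuristic: $h(o_{\mathcal I,d})=-\max\{\log\ell_{\rm leaf}(c^1(\mathcal I),c^0(\mathcal I)),\log p_{\rm split}(d)+\log\ell_{\rm leaf}(c^1(\mathcal I),0)+\log\ell_{\rm leaf}(0,c^0(\mathcal I))\}$. MAPTree maintains a node set $\mathcal G'$, a set $\mathcal E$ of expanded OR nodes, and values $LB[u],UB[u]\in\mathbb R\cup\{+\infty\}$ for OR nodes ($UB[u]=+\infty$ until set); for an AND node $a$ with children $o_0,o_1$, $LB[a]=LB[o_0]+LB[o_1]$ and $UB[a]=UB[o_0]+UB[o_1]$. Initialize $\mathcal G'=\{r\}$, $\mathcal E=\emptyset$, $LB[r]=h(r)$, $UB[r]=+\infty$.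 While $LB[r]<UB[r]$ (and optionally while time remains): (1) $o:=r$; while $o\in\mathcal E$, choose an AND child $a^*$ of $o$ minimizing $\mathrm{cost}(o,a)+LB[a]$, with children $o_0$ (value-0 side) and $o_1$, and set $o:=o_0$ if $UB[o_0]-LB[o_0]>UB[o_1]-LB[o_1]$, else $o:=o_1$. (2) Add $o$ to $\mathcal E$ and its terminal child to $\mathcal G'$; for each AND child $a$ of $o$ with children $o_0,o_1$, add $a,o_0,o_1$ to $\mathcal G'$ and set $LB[o_0]:=h(o_0)$, $LB[o_1]:=h(o_1)$. (3) Starting from $Q=\{o\}$, repeatedly remove from $Q$ an OR node $u$ of maximal depth, compute $v=\min\{\min_a(\mathrm{cost}(u,a)+LB[a]),\mathrm{cost}(u,t_u)\}$ over the AND children $a$ and terminal child $t_u$ of $u$; if $v>LB[u]$, set $LB[u]:=v$ and add to $Q$ every OR node of $\mathcal G'$ that is the parent of an AND node of $\mathcal G'$ having $u$ as child. (4) The same with $UB$ in place of $LB$, updating when $v<UB[u]$. $\mathrm{getSolution}(u)$, for an OR node $u$ with terminal child $t$: if $u$ has no AND child or $\mathrm{cost}(u,t)\le\min_a(\mathrm{cost}(u,a)+UB[a])$, return $\{u,t\}$; else, with $a^*$ an AND child attaining the minimum and children $u_0,u_1$, return $\{u,a^*\}\cup\mathrm{getSolution}(u_0)\cup\mathrm{getSolution}(u_1)$. *)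

theory Defs
  imports "HOL-Analysis.Analysis"
begin

text \<open>Binary dataset: xv i f is the value (x_i)_f (True = 1), for i in {1..nN}, f in {1..nF};
  yv i is the label y_i (True = 1).\<close>

record inst =
  nN :: nat
  nF :: nat
  xv :: "nat \<Rightarrow> nat \<Rightarrow> bool"
  yv :: "nat \<Rightarrow> bool"
  rho1 :: real
  rho0 :: real
  alpha :: real
  beta :: real

definition valid_inst :: "inst \<Rightarrow> bool" where
  "valid_inst P \<longleftrightarrow> rho1 P > 0 \<and> rho0 P > 0 \<and> 0 < alpha P \<and> alpha P < 1 \<and> beta P \<ge> 0"

definition restr :: "inst \<Rightarrow> nat set \<Rightarrow> nat \<Rightarrow> bool \<Rightarrow> nat set" where
  "restr P I f k = {i \<in> I. xv P i f = k}"

definition cnt :: "inst \<Rightarrow> bool \<Rightarrow> nat set \<Rightarrow> nat" where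
  "cnt P k I = card {i \<in> I. yv P i = k}"

definition Vs :: "inst \<Rightarrow> nat set \<Rightarrow> nat set" where
  "Vs P I = {f \<in> {1..nF P}. restr P I f False \<noteq> {} \<and> restr P I f True \<noteq> {}}"

definition ell :: "inst \<Rightarrow> nat \<Rightarrow> nat \<Rightarrow> real" where
  "ell P c1 c0 = Beta (real c1 + rho1 P) (real c0 + rho0 P) / Beta (rho1 P) (rho0 P)"

definition psplit :: "inst \<Rightarrow> nat \<Rightarrow> real" where
  "psplit P d = alpha P * (1 + real d) powr (- beta P)"

definition pleaf :: "inst \<Rightarrow> nat \<Rightarrow> nat set \<Rightarrow> real" where
  "pleaf P d I = (if Vs P I = {} then 1 else 1 - psplit P d)"

definition pinner :: "inst \<Rightarrow> nat \<Rightarrow> nat set \<Rightarrow> real" where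
  "pinner P d I = (if Vs P I = {} then 0 else psplit P d / real (card (Vs P I)))"

definition nlog :: "real \<Rightarrow> ereal" where
  "nlog p = (if p = 0 then \<infinity> else ereal (- ln p))"

datatype node = OrN "nat set" nat | TermN "nat set" nat | AndN "nat set" nat nat

fun isOr :: "node \<Rightarrow> bool" where
  "isOr (OrN _ _) = True" | "isOr _ = False"

fun isAnd :: "node \<Rightarrow> bool" where
  "isAnd (AndN _ _ _) = True" | "isAnd _ = False"

fun depth :: "node \<Rightarrow> nat" where
  "depth (OrN _ d) = d" | "depth (TermN _ d) = d" | "depth (AndN _ d _) = d"

fun termch :: "node \<Rightarrow> node" where
  "termch (OrN I d) = TermN I d" | "termch n = n"

fun child0 :: "inst \<Rightarrow> node \<Rightarrow> node" where
  "child0 P (AndN I d f) = OrN (restr P I f False) (Suc d)" | "child0 P n = n"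

fun child1 :: "inst \<Rightarrow> node \<Rightarrow> node" where
  "child1 P (AndN I d f) = OrN (restr P I f True) (Suc d)" | "child1 P n = n"

text \<open>Edges of the full graph G (OR nodes exist only for nonempty index sets).\<close>
fun gedge :: "inst \<Rightarrow> node \<Rightarrow> node \<Rightarrow> bool" where
  "gedge P (OrN I d) w \<longleftrightarrow> I \<noteq> {} \<and>
     (w = TermN I d \<or> (\<exists>f. d < nF P \<and> f \<in> Vs P I \<and> w = AndN I d f))"
| "gedge P (AndN I d f) w \<longleftrightarrow> I \<noteq> {} \<and> d < nF P \<and> f \<in> Vs P I \<and>
     (w = OrN (restr P I f False) (Suc d) \<or> w = OrN (restr P I f True) (Suc d))"
| "gedge P (TermN _ _) w \<longleftrightarrow> False"

definition root :: "inst \<Rightarrow> node" where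
  "root P = OrN {1..nN P} 0"

definition Gnodes :: "inst \<Rightarrow> node set" where
  "Gnodes P = {v. (gedge P)\<^sup>*\<^sup>* (root P) v}"

fun cost :: "inst \<Rightarrow> node \<Rightarrow> node \<Rightarrow> ereal" where
  "cost P (OrN I d) (TermN _ _) =
     nlog (pleaf P d I) + nlog (ell P (cnt P True I) (cnt P False I))"
| "cost P (OrN I d) (AndN _ _ _) = nlog (pinner P d I)"
| "cost P _ _ = 0"

fun h :: "inst \<Rightarrow> node \<Rightarrow> ereal" where
  "h P (OrN I d) = ereal (- max (ln (ell P (cnt P True I) (cnt P False I)))
        (ln (psplit P d) + ln (ell P (cnt P True I) 0) + ln (ell P 0 (cnt P False I))))"
| "h P _ = 0"

definition partial_sol :: "inst \<Rightarrow> node set \<Rightarrow> node \<Rightarrow> node set \<Rightarrow> bool" where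
  "partial_sol P G' u S \<longleftrightarrow>
     S \<subseteq> G' \<and> u \<in> S \<and> isOr u \<and>
     (\<forall>v\<in>S. (\<lambda>a b. gedge P a b \<and> a \<in> S \<and> b \<in> S)\<^sup>*\<^sup>* u v) \<and>
     (\<forall>a\<in>S. isAnd a \<longrightarrow> {w. gedge P a w} \<subseteq> S) \<and>
     (\<forall>v\<in>S. isOr v \<longrightarrow> card {w \<in> S. gedge P v w} = 1)"

definition solcost :: "inst \<Rightarrow> node set \<Rightarrow> ereal" where
  "solcost P S = (\<Sum>(v, w) \<in> {(v, w). v \<in> S \<and> w \<in> S \<and> gedge P v w}. cost P v w)"

text \<open>LB/UB are stored for OR nodes; for AND nodes they are derived via aval.\<close>
record state =
  Gp :: "node set"
  Ex :: "node set"
  LB :: "node \<Rightarrow> ereal"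
  UB :: "node \<Rightarrow> ereal"

definition aval :: "inst \<Rightarrow> (node \<Rightarrow> ereal) \<Rightarrow> node \<Rightarrow> ereal" where
  "aval P L a = (if isAnd a then L (child0 P a) + L (child1 P a) else L a)"

definition andch :: "inst \<Rightarrow> node set \<Rightarrow> node \<Rightarrow> node set" where
  "andch P S u = {a \<in> S. isAnd a \<and> gedge P u a}"

definition init :: "inst \<Rightarrow> state" where
  "init P = \<lparr> Gp = {root P}, Ex = {},
              LB = (\<lambda>n. if n = root P then h P (root P) else 0),
              UB = (\<lambda>_. \<infinity>) \<rparr>"

text \<open>Step (1): descent from x to the selected unexpanded OR node (nondeterministic in ties).\<close>
inductive sel :: "inst \<Rightarrow> state \<Rightarrow> node \<Rightarrow> node \<Rightarrow> bool" for P s where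
  stop: "x \<notin> Ex s \<Longrightarrow> sel P s x x"
| descend: "\<lbrakk> x \<in> Ex s; a \<in> andch P (Gp s) x;
     \<forall>a' \<in> andch P (Gp s) x. cost P x a + aval P (LB s) a \<le> cost P x a' + aval P (LB s) a';
     x'' = (if UB s (child0 P a) - LB s (child0 P a) > UB s (child1 P a) - LB s (child1 P a)
            then child0 P a else child1 P a);
     sel P s x'' x' \<rbrakk> \<Longrightarrow> sel P s x x'"

definition newor :: "inst \<Rightarrow> node \<Rightarrow> node set" where
  "newor P x = {c. \<exists>a. isAnd a \<and> gedge P x a \<and> (c = child0 P a \<or> c = child1 P a)}"

definition expand :: "inst \<Rightarrow> state \<Rightarrow> node \<Rightarrow> state" where
  "expand P s x = s\<lparr> Ex := insert x (Ex s),
     Gp := Gp s \<union> {termch x} \<union> {a. isAnd a \<and> gedge P x a} \<union> newor P x,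
     LB := (\<lambda>n. if n \<in> newor P x then h P n else LB s n) \<rparr>"

text \<open>Value v computed at an OR node u in steps (3)/(4).\<close>
definition orval :: "inst \<Rightarrow> node set \<Rightarrow> (node \<Rightarrow> ereal) \<Rightarrow> node \<Rightarrow> ereal" where
  "orval P S L u = min (Inf {cost P u a + aval P L a | a. a \<in> andch P S u}) (cost P u (termch u))"

definition parents :: "inst \<Rightarrow> node set \<Rightarrow> node \<Rightarrow> node set" where
  "parents P S u = {p \<in> S. isOr p \<and> (\<exists>a \<in> S. isAnd a \<and> gedge P p a \<and> gedge P a u)}"

text \<open>One step of the queue loop of steps (3)/(4); better v old decides whether to update.\<close>
inductive prop_step :: "inst \<Rightarrow> node set \<Rightarrow> (ereal \<Rightarrow> ereal \<Rightarrow> bool)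
    \<Rightarrow> (node \<Rightarrow> ereal) \<times> node set \<Rightarrow> (node \<Rightarrow> ereal) \<times> node set \<Rightarrow> bool"
  for P S better where
  upd: "\<lbrakk> u \<in> Q; \<forall>u' \<in> Q. depth u' \<le> depth u; v = orval P S L u; better v (L u) \<rbrakk>
        \<Longrightarrow> prop_step P S better (L, Q) (L(u := v), (Q - {u}) \<union> parents P S u)"
| noupd: "\<lbrakk> u \<in> Q; \<forall>u' \<in> Q. depth u' \<le> depth u; v = orval P S L u; \<not> better v (L u) \<rbrakk>
        \<Longrightarrow> prop_step P S better (L, Q) (L, Q - {u})"

inductive iter :: "inst \<Rightarrow> state \<Rightarrow> state \<Rightarrow> bool" for P where
  "\<lbrakk> LB s (root P) < UB s (root P);
     sel P s (root P) x;
     s1 = expand P s x;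
     (prop_step P (Gp s1) (\<lambda>v old. old < v))\<^sup>*\<^sup>* (LB s1, {x}) (L2, {});
     (prop_step P (Gp s1) (\<lambda>v old. v < old))\<^sup>*\<^sup>* (UB s1, {x}) (U2, {}) \<rbrakk>
   \<Longrightarrow> iter P s (s1\<lparr> LB := L2, UB := U2 \<rparr>)"

definition bestand :: "inst \<Rightarrow> state \<Rightarrow> node \<Rightarrow> ereal" where
  "bestand P s u = Inf {cost P u a + aval P (UB s) a | a. a \<in> andch P (Gp s) u}"

inductive getSol :: "inst \<Rightarrow> state \<Rightarrow> node \<Rightarrow> node set \<Rightarrow> bool" for P s where
  leaf: "\<lbrakk> isOr u; andch P (Gp s) u = {} \<or> cost P u (termch u) \<le> bestand P s u \<rbrakk>
         \<Longrightarrow> getSol P s u {u, termch u}"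
| inner: "\<lbrakk> isOr u; \<not> (andch P (Gp s) u = {} \<or> cost P u (termch u) \<le> bestand P s u);
           a \<in> andch P (Gp s) u; cost P u a + aval P (UB s) a = bestand P s u;
           getSol P s (child0 P a) S0; getSol P s (child1 P a) S1 \<rbrakk>
         \<Longrightarrow> getSol P s u ({u, a} \<union> S0 \<union> S1)"

end

theory Submission
  imports Defs
begin

text \<open>Throughout the main loop, every OR node of G' with a child in G' is expanded, UB is
  infinite on unexpanded nodes, and on expanded nodes UB is a fixpoint of the Bellman update
  UB[u] = min (cost(u, t_u), min_a cost(u, a) + UB[a]) taken in G'. Expanding x keeps this
  (UB[x] is still infinite), and the UB propagation maintains "UB is at least its Bellman
  update, with equality off the queue" until the queue is empty.

  A function not exceeding its Bellman update is a lower bound for the cost of every partial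
  solution, by induction along the solution. Conversely getSol follows choices attaining the
  Bellman minimum, and since a finite UB forces the chosen children to be expanded, it returns a
  partial solution of cost exactly UB[u].\<close>

section \<open>The AND/OR graph\<close>

fun samples :: "node \<Rightarrow> nat set" where
  "samples (OrN I _) = I" | "samples (TermN I _) = I" | "samples (AndN I _ _) = I"

lemma gedge_samples_depth:
  assumes "gedge P v w"
  shows "samples w \<subseteq> samples v" "samples w \<noteq> {}" "depth v \<le> depth w"
  using assms by (cases v; auto simp: restr_def Vs_def)+

lemma gedge_from_Or:
  assumes "gedge P v w" "isOr v"
  shows "v = OrN (samples w) (depth w)" "w = termch v \<or> isAnd w"
  using assms by (cases v; auto)+

lemma gedge_from_And:
  assumes "gedge P a w" "isAnd a"
  shows "w = child0 P a \<or> w = child1 P a"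
  using assms by (cases a) auto

lemma gedge_to_And:
  assumes "gedge P u a" "isAnd a"
  shows "isOr u" "depth a = depth u" "depth u < nF P"
  using assms by (cases u; cases a; auto)+

lemma gedge_And_children:
  assumes "gedge P u a" "isAnd a"
  shows "gedge P a (child0 P a)" "gedge P a (child1 P a)"
    and "isOr (child0 P a)" "isOr (child1 P a)"
  using assms by (cases u; cases a; auto)+

lemma depth_And_children:
  assumes "gedge P u a" "isAnd a"
  shows "depth (child0 P a) = Suc (depth u)" "depth (child1 P a) = Suc (depth u)"
  using assms by (cases u; cases a; auto)+

lemma samples_And_children:
  assumes "gedge P u a" "isAnd a"
  shows "samples (child0 P a) \<noteq> {}" "samples (child1 P a) \<noteq> {}"
    and "samples (child0 P a) \<inter> samples (child1 P a) = {}"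
  using assms by (cases u; cases a; auto simp: restr_def Vs_def)+

lemma cost_from_And: "isAnd a \<Longrightarrow> cost P a w = 0"
  by (cases a; cases w) auto

text \<open>below c contains everything reachable from c. The sets below the two children of an AND node
  are disjoint, so the two halves of a partial solution never share a node.\<close>

definition below :: "node \<Rightarrow> node set" where
  "below c = {x. samples x \<subseteq> samples c \<and> samples x \<noteq> {} \<and> depth c \<le> depth x}"

lemma gedge_below: "v \<in> below c \<Longrightarrow> gedge P v w \<Longrightarrow> w \<in> below c"
  using gedge_samples_depth[of P v w] by (auto simp: below_def)

lemma below_children_disjoint:
  assumes "gedge P u a" "isAnd a"
  shows "below (child0 P a) \<inter> below (child1 P a) = {}"
  using samples_And_children(3)[OF assms] by (auto simp: below_def)

lemma depth_below_child:
  assumes "gedge P u a" "isAnd a" "v \<in> below (child0 P a) \<union> below (child1 P a)"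
  shows "depth u < depth v"
  using depth_And_children[OF assms(1,2)] assms(3) by (auto simp: below_def)

section \<open>Partial solutions\<close>

definition gedge_within :: "inst \<Rightarrow> node set \<Rightarrow> node \<Rightarrow> node \<Rightarrow> bool" where
  "gedge_within P S v w \<longleftrightarrow> gedge P v w \<and> v \<in> S \<and> w \<in> S"

lemma partial_sol_iff:
  "partial_sol P G u S \<longleftrightarrow>
     S \<subseteq> G \<and> u \<in> S \<and> isOr u \<and>
     (\<forall>v\<in>S. (gedge_within P S)\<^sup>*\<^sup>* u v) \<and>
     (\<forall>a\<in>S. isAnd a \<longrightarrow> {w. gedge P a w} \<subseteq> S) \<and>
     (\<forall>v\<in>S. isOr v \<longrightarrow> card {w \<in> S. gedge P v w} = 1)"
proof -
  have "(\<lambda>a b. gedge P a b \<and> a \<in> S \<and> b \<in> S) = gedge_within P S"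
    by (auto simp: gedge_within_def fun_eq_iff)
  then show ?thesis unfolding partial_sol_def by simp
qed

lemma gedge_within_mono: "S \<subseteq> S' \<Longrightarrow> (gedge_within P S)\<^sup>*\<^sup>* v w \<Longrightarrow> (gedge_within P S')\<^sup>*\<^sup>* v w"
  by (erule rtranclp_mono[THEN predicate2D, rotated]) (auto simp: gedge_within_def)

lemma partial_sol_unique_child:
  assumes "partial_sol P G u S" "v \<in> S" "isOr v"
  obtains w where "{w' \<in> S. gedge P v w'} = {w}"
  using assms unfolding partial_sol_iff by (metis card_1_singletonE)

lemma partial_sol_subset_below:
  assumes "partial_sol P G c S" "samples c \<noteq> {}"
  shows "S \<subseteq> below c"
proof
  fix v assume "v \<in> S"
  then have "(gedge_within P S)\<^sup>*\<^sup>* c v" using assms(1) by (simp add: partial_sol_iff)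
  then show "v \<in> below c"
  proof (induction rule: rtranclp_induct)
    case base then show ?case using assms(2) by (simp add: below_def)
  next
    case (step y z) then show ?case by (auto simp: gedge_within_def intro: gedge_below)
  qed
qed

definition subsolution :: "inst \<Rightarrow> node set \<Rightarrow> node \<Rightarrow> node set" where
  "subsolution P S c = {x \<in> S. (gedge_within P S)\<^sup>*\<^sup>* c x}"

lemma gedge_within_subsolution:
  assumes "(gedge_within P S)\<^sup>*\<^sup>* c w"
  shows "(gedge_within P (subsolution P S c))\<^sup>*\<^sup>* c w"
  using assms
proof (induction rule: rtranclp_induct)
  case (step y z)
  then have "gedge_within P (subsolution P S c) y z"
    by (auto simp: gedge_within_def subsolution_def intro: rtranclp.rtrancl_into_rtrancl)
  with step.IH show ?case by (rule rtranclp.rtrancl_into_rtrancl)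
qed simp

lemma partial_sol_subsolution:
  assumes sol: "partial_sol P G u S" and c: "c \<in> S" "isOr c"
  shows "partial_sol P G c (subsolution P S c)"
proof -
  let ?T = "subsolution P S c"
  have closed: "w \<in> ?T" if "v \<in> ?T" "gedge P v w" "w \<in> S" for v w
    using that by (auto simp: subsolution_def gedge_within_def intro: rtranclp.rtrancl_into_rtrancl)
  show ?thesis
    unfolding partial_sol_iff
  proof (intro conjI ballI impI)
    show "?T \<subseteq> G" "c \<in> ?T" "isOr c"
      using sol c by (auto simp: partial_sol_iff subsolution_def)
    show "(gedge_within P ?T)\<^sup>*\<^sup>* c v" if "v \<in> ?T" for v
      using that gedge_within_subsolution by (auto simp: subsolution_def)
    show "{w. gedge P a w} \<subseteq> ?T" if "a \<in> ?T" "isAnd a" for a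
      using sol that closed by (fastforce simp: partial_sol_iff subsolution_def)
    show "card {w \<in> ?T. gedge P v w} = 1" if "v \<in> ?T" "isOr v" for v
    proof -
      have "{w \<in> ?T. gedge P v w} = {w \<in> S. gedge P v w}"
        using that(1) closed by (auto simp: subsolution_def)
      with sol that show ?thesis by (auto simp: partial_sol_iff subsolution_def)
    qed
  qed
qed

lemma partial_sol_reach_from_child:
  assumes sol: "partial_sol P G u S" and w: "{w' \<in> S. gedge P u w'} = {w}"
    and "v \<in> S" "v \<noteq> u"
  shows "(gedge_within P S)\<^sup>*\<^sup>* w v"
proof -
  have "(gedge_within P S)\<^sup>*\<^sup>* u v" using sol \<open>v \<in> S\<close> by (simp add: partial_sol_iff)
  then obtain y where "gedge_within P S u y" "(gedge_within P S)\<^sup>*\<^sup>* y v"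
    using \<open>v \<noteq> u\<close> by (metis converse_rtranclpE)
  moreover from this(1) have "y = w" using w by (auto simp: gedge_within_def)
  ultimately show ?thesis by simp
qed

lemma partial_sol_terminal:
  assumes sol: "partial_sol P G u S" and "termch u \<in> S" "gedge P u (termch u)"
  shows "S = {u, termch u}"
proof -
  have u: "u \<in> S" "isOr u" using sol by (auto simp: partial_sol_iff)
  then obtain w where w: "{w' \<in> S. gedge P u w'} = {w}"
    using partial_sol_unique_child[OF sol] by blast
  with assms have "w = termch u" by auto
  have "v = termch u" if "v \<in> S" "v \<noteq> u" for v
  proof -
    have "(gedge_within P S)\<^sup>*\<^sup>* (termch u) v"
      using partial_sol_reach_from_child[OF sol w that] \<open>w = termch u\<close> by simp
    moreover obtain I d where "u = OrN I d" using u by (cases u) auto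
    ultimately show ?thesis by (auto simp: gedge_within_def elim: converse_rtranclpE)
  qed
  with u assms(2) show ?thesis by auto
qed

lemma partial_sol_split:
  assumes sol: "partial_sol P G u S" and a: "a \<in> S" "gedge P u a" "isAnd a"
  shows "S = {u, a} \<union> subsolution P S (child0 P a) \<union> subsolution P S (child1 P a)"
    and "partial_sol P G (child0 P a) (subsolution P S (child0 P a))"
    and "partial_sol P G (child1 P a) (subsolution P S (child1 P a))"
proof -
  have u: "u \<in> S" "isOr u" using sol by (auto simp: partial_sol_iff)
  have "child0 P a \<in> S" "child1 P a \<in> S"
    using sol a gedge_And_children(1,2)[OF a(2,3)] by (auto simp: partial_sol_iff)
  then show "partial_sol P G (child0 P a) (subsolution P S (child0 P a))"
    and "partial_sol P G (child1 P a) (subsolution P S (child1 P a))"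
    using partial_sol_subsolution[OF sol] gedge_And_children(3,4)[OF a(2,3)] by auto
  obtain w where w: "{w' \<in> S. gedge P u w'} = {w}"
    using partial_sol_unique_child[OF sol u] by blast
  with a have "w = a" by auto
  have "v \<in> subsolution P S (child0 P a) \<union> subsolution P S (child1 P a)"
    if v: "v \<in> S" "v \<noteq> u" "v \<noteq> a" for v
  proof -
    have "(gedge_within P S)\<^sup>*\<^sup>* a v"
      using partial_sol_reach_from_child[OF sol w v(1,2)] \<open>w = a\<close> by simp
    then obtain z where "gedge_within P S a z" "(gedge_within P S)\<^sup>*\<^sup>* z v"
      using v(3) by (metis converse_rtranclpE)
    moreover from this(1) have "z = child0 P a \<or> z = child1 P a"
      using gedge_from_And a(3) by (auto simp: gedge_within_def)
    ultimately show ?thesis using v(1) by (auto simp: subsolution_def)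
  qed
  with u a(1) show "S = {u, a} \<union> subsolution P S (child0 P a) \<union> subsolution P S (child1 P a)"
    by (auto simp: subsolution_def)
qed

definition sol_edges :: "inst \<Rightarrow> node set \<Rightarrow> (node \<times> node) set" where
  "sol_edges P S = {(v, w). v \<in> S \<and> w \<in> S \<and> gedge P v w}"

lemma solcost_sol_edges: "solcost P S = (\<Sum>(v, w) \<in> sol_edges P S. cost P v w)"
  by (simp add: solcost_def sol_edges_def)

lemma finite_sol_edges: "finite S \<Longrightarrow> finite (sol_edges P S)"
  by (rule finite_subset[of _ "S \<times> S"]) (auto simp: sol_edges_def)

lemma solcost_leaf:
  assumes "isOr u" "samples u \<noteq> {}"
  shows "solcost P {u, termch u} = cost P u (termch u)"
proof -
  obtain I d where "u = OrN I d" "I \<noteq> {}" using assms by (cases u) auto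
  then have "sol_edges P {u, termch u} = {(u, termch u)}" by (auto simp: sol_edges_def)
  then show ?thesis by (simp add: solcost_sol_edges)
qed

lemma partial_sol_leaf:
  assumes "u \<in> G" "termch u \<in> G" "isOr u" "samples u \<noteq> {}"
  shows "partial_sol P G u {u, termch u}"
proof -
  obtain I d where u: "u = OrN I d" "I \<noteq> {}" using assms(3,4) by (cases u) auto
  then have edge: "gedge P u (termch u)" by simp
  moreover have "{w \<in> {u, termch u}. gedge P v w} = {termch u}" if "v \<in> {u, termch u}" "isOr v" for v
    using that edge u by auto
  ultimately show ?thesis
    using assms u by (auto simp: partial_sol_iff gedge_within_def)
qed

context
  fixes P :: inst and u a :: node and G S0 S1 :: "node set"
  assumes ua: "gedge P u a" and aA: "isAnd a"
    and sol0: "partial_sol P G (child0 P a) S0" and sol1: "partial_sol P G (child1 P a) S1"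
begin

lemma join_cases:
  assumes "v \<in> {u, a} \<union> S0 \<union> S1"
  obtains "v = u" | "v = a" | "v \<in> S0" | "v \<in> S1"
  using assms by blast

lemma join_parts_below: "S0 \<subseteq> below (child0 P a)" "S1 \<subseteq> below (child1 P a)"
  using partial_sol_subset_below[OF sol0] partial_sol_subset_below[OF sol1]
    samples_And_children(1,2)[OF ua aA] by auto

lemma join_below_excludes:
  "below (child0 P a) \<inter> ({u, a} \<union> S1) = {}" "below (child1 P a) \<inter> ({u, a} \<union> S0) = {}"
proof -
  have "u \<notin> below (child0 P a) \<union> below (child1 P a)" "a \<notin> below (child0 P a) \<union> below (child1 P a)"
    using depth_below_child[OF ua aA, of u] depth_below_child[OF ua aA, of a] gedge_to_And(2)[OF ua aA]
    by auto
  then show "below (child0 P a) \<inter> ({u, a} \<union> S1) = {}" "below (child1 P a) \<inter> ({u, a} \<union> S0) = {}"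
    using join_parts_below below_children_disjoint[OF ua aA] by blast+
qed

lemma join_parts_disjoint: "S0 \<inter> S1 = {}" "u \<notin> S0 \<union> S1" "a \<notin> S0 \<union> S1"
  using join_parts_below join_below_excludes by blast+

lemma join_edge_closed:
  assumes "gedge P v w" "w \<in> {u, a} \<union> S0 \<union> S1"
  shows "v \<in> S0 \<Longrightarrow> w \<in> S0" and "v \<in> S1 \<Longrightarrow> w \<in> S1"
proof -
  show "w \<in> S0" if "v \<in> S0"
    using gedge_below[OF _ assms(1)] that assms(2) join_parts_below(1) join_below_excludes(1) by blast
  show "w \<in> S1" if "v \<in> S1"
    using gedge_below[OF _ assms(1)] that assms(2) join_parts_below(2) join_below_excludes(2) by blast
qed

lemma join_root_child:
  assumes "gedge P u w" "w \<in> {u, a} \<union> S0 \<union> S1"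
  shows "w = a"
proof -
  have "depth w = depth u" "\<not> isOr w"
    using gedge_from_Or[OF assms(1) gedge_to_And(1)[OF ua aA]] by (cases w; auto)+
  moreover have "w \<notin> S0 \<union> S1"
    using join_parts_below depth_below_child[OF ua aA, of w] \<open>depth w = depth u\<close> by auto
  ultimately show ?thesis
    using assms(2) gedge_to_And(1)[OF ua aA] by auto
qed

lemma sol_edges_join:
  "sol_edges P ({u, a} \<union> S0 \<union> S1) =
     {(u, a), (a, child0 P a), (a, child1 P a)} \<union> sol_edges P S0 \<union> sol_edges P S1"
    (is "sol_edges P ?S = ?E")
proof
  have "(v, w) \<in> ?E" if vw: "v \<in> ?S" "w \<in> ?S" "gedge P v w" for v w
  proof (cases rule: join_cases[OF vw(1)])
    case 1 then show ?thesis using join_root_child vw(2,3) by simp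
  next
    case 2 then show ?thesis using gedge_from_And[of P a w] vw(3) aA by auto
  next
    case 3 then show ?thesis using join_edge_closed(1)[OF vw(3,2)] vw by (simp add: sol_edges_def)
  next
    case 4 then show ?thesis using join_edge_closed(2)[OF vw(3,2)] vw by (simp add: sol_edges_def)
  qed
  then show "sol_edges P ?S \<subseteq> ?E" by (auto simp: sol_edges_def)
  have "child0 P a \<in> S0" "child1 P a \<in> S1" using sol0 sol1 by (auto simp: partial_sol_iff)
  then show "?E \<subseteq> sol_edges P ?S"
    using ua gedge_And_children(1,2)[OF ua aA] by (auto simp: sol_edges_def)
qed

lemma join_reachable:
  assumes "v \<in> {u, a} \<union> S0 \<union> S1"
  shows "(gedge_within P ({u, a} \<union> S0 \<union> S1))\<^sup>*\<^sup>* u v"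
proof -
  let ?S = "{u, a} \<union> S0 \<union> S1"
  have c: "child0 P a \<in> S0" "child1 P a \<in> S1" using sol0 sol1 by (auto simp: partial_sol_iff)
  have ua': "gedge_within P ?S u a"
    and a0: "gedge_within P ?S a (child0 P a)" and a1: "gedge_within P ?S a (child1 P a)"
    using ua c gedge_And_children(1,2)[OF ua aA] by (auto simp: gedge_within_def)
  show ?thesis
  proof (cases rule: join_cases[OF assms])
    case 3
    then have "(gedge_within P ?S)\<^sup>*\<^sup>* (child0 P a) v"
      using sol0 by (auto simp: partial_sol_iff intro: gedge_within_mono[of S0])
    then show ?thesis using ua' a0 by (meson converse_rtranclp_into_rtranclp)
  next
    case 4
    then have "(gedge_within P ?S)\<^sup>*\<^sup>* (child1 P a) v"
      using sol1 by (auto simp: partial_sol_iff intro: gedge_within_mono[of S1])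
    then show ?thesis using ua' a1 by (meson converse_rtranclp_into_rtranclp)
  qed (use ua' in auto)
qed

lemma join_unique_child:
  assumes "v \<in> {u, a} \<union> S0 \<union> S1" "isOr v"
  shows "card {w \<in> {u, a} \<union> S0 \<union> S1. gedge P v w} = 1"
proof (cases rule: join_cases[OF assms(1)])
  case 1
  then have "{w \<in> {u, a} \<union> S0 \<union> S1. gedge P v w} = {a}" using ua join_root_child by auto
  then show ?thesis by simp
next
  case 2
  then show ?thesis using assms(2) aA by (cases a) auto
next
  case 3
  then have "{w \<in> {u, a} \<union> S0 \<union> S1. gedge P v w} = {w \<in> S0. gedge P v w}"
    using join_edge_closed(1) by auto
  then show ?thesis using 3 assms(2) sol0 by (auto simp: partial_sol_iff)
next
  case 4
  then have "{w \<in> {u, a} \<union> S0 \<union> S1. gedge P v w} = {w \<in> S1. gedge P v w}"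
    using join_edge_closed(2) by auto
  then show ?thesis using 4 assms(2) sol1 by (auto simp: partial_sol_iff)
qed

lemma partial_sol_join:
  assumes "u \<in> G" "a \<in> G"
  shows "partial_sol P G u ({u, a} \<union> S0 \<union> S1)"
  unfolding partial_sol_iff
proof (intro conjI ballI impI join_reachable join_unique_child)
  show "{u, a} \<union> S0 \<union> S1 \<subseteq> G" "u \<in> {u, a} \<union> S0 \<union> S1" "isOr u"
    using assms sol0 sol1 gedge_to_And(1)[OF ua aA] by (auto simp: partial_sol_iff)
  show "{w. gedge P b w} \<subseteq> {u, a} \<union> S0 \<union> S1" if b: "b \<in> {u, a} \<union> S0 \<union> S1" "isAnd b" for b
  proof (cases rule: join_cases[OF b(1)])
    case 1 then show ?thesis using b(2) gedge_to_And(1)[OF ua aA] by (cases b) auto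
  next
    case 2 then show ?thesis using sol0 sol1 gedge_from_And[of P a] aA by (auto simp: partial_sol_iff)
  next
    case 3 then show ?thesis using b(2) sol0 by (auto simp: partial_sol_iff)
  next
    case 4 then show ?thesis using b(2) sol1 by (auto simp: partial_sol_iff)
  qed
qed

lemma solcost_join:
  assumes "finite G"
  shows "solcost P ({u, a} \<union> S0 \<union> S1) = cost P u a + solcost P S0 + solcost P S1"
proof -
  let ?f = "\<lambda>(v, w). cost P v w" and ?E = "{(u, a), (a, child0 P a), (a, child1 P a)}"
  have "finite S0" "finite S1"
    using assms sol0 sol1 by (auto simp: partial_sol_iff intro: finite_subset)
  then have fin: "finite (sol_edges P S0)" "finite (sol_edges P S1)"
    by (simp_all add: finite_sol_edges)
  have disj: "sol_edges P S0 \<inter> sol_edges P S1 = {}" "?E \<inter> (sol_edges P S0 \<union> sol_edges P S1) = {}"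
    using join_parts_disjoint by (auto simp: sol_edges_def)
  have "u \<noteq> a" using gedge_to_And(1)[OF ua aA] aA by (cases a) auto
  moreover have "child0 P a \<noteq> child1 P a" using samples_And_children(1,3)[OF ua aA] by auto
  ultimately have E: "sum ?f ?E = cost P u a" by (simp add: cost_from_And[OF aA])
  have "solcost P ({u, a} \<union> S0 \<union> S1) = sum ?f (?E \<union> (sol_edges P S0 \<union> sol_edges P S1))"
    unfolding solcost_sol_edges sol_edges_join by (simp add: Un_assoc)
  also have "\<dots> = sum ?f ?E + sum ?f (sol_edges P S0 \<union> sol_edges P S1)"
    using fin disj by (intro sum.union_disjoint) auto
  also have "sum ?f (sol_edges P S0 \<union> sol_edges P S1) = solcost P S0 + solcost P S1"
    unfolding solcost_sol_edges using fin disj by (intro sum.union_disjoint) auto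
  finally show ?thesis using E by (simp add: add.assoc)
qed

end

section \<open>Bellman bounds and getSolution\<close>

lemma andch_iff: "a \<in> andch P S u \<longleftrightarrow> a \<in> S \<and> isAnd a \<and> gedge P u a"
  by (simp add: andch_def)

lemma aval_And: "isAnd a \<Longrightarrow> aval P L a = L (child0 P a) + L (child1 P a)"
  by (simp add: aval_def)

lemma orval_le_cost_termch: "orval P S L u \<le> cost P u (termch u)"
  by (simp add: orval_def)

lemma orval_le_cost_And: "a \<in> andch P S u \<Longrightarrow> orval P S L u \<le> cost P u a + aval P L a"
  unfolding orval_def by (rule min.coboundedI1) (auto intro: Inf_lower)

lemma orval_mono:
  assumes "\<And>v. L v \<le> L' v"
  shows "orval P S L u \<le> orval P S L' u"
proof -
  have "aval P L a \<le> aval P L' a" for a using assms by (simp add: aval_def add_mono)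
  then have "(INF a\<in>andch P S u. cost P u a + aval P L a) \<le> (INF a\<in>andch P S u. cost P u a + aval P L' a)"
    by (intro INF_mono') (simp add: add_mono)
  then show ?thesis unfolding orval_def Setcompr_eq_image by (rule min.mono) simp
qed

lemma orval_cong:
  assumes "\<And>a. a \<in> andch P S u \<Longrightarrow> L (child0 P a) = L' (child0 P a) \<and> L (child1 P a) = L' (child1 P a)"
  shows "orval P S L u = orval P S L' u"
proof -
  have "(\<lambda>a. cost P u a + aval P L a) ` andch P S u = (\<lambda>a. cost P u a + aval P L' a) ` andch P S u"
    using assms by (intro image_cong) (auto simp: aval_def andch_iff)
  then show ?thesis by (simp add: orval_def Setcompr_eq_image)
qed

lemma bellman_le_solcost:
  assumes "finite G"
    and bellman: "\<And>v w. isOr v \<Longrightarrow> gedge P v w \<Longrightarrow> w \<in> G \<Longrightarrow> U v \<le> orval P G U v"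
    and "partial_sol P G u S"
  shows "U u \<le> solcost P S"
  using assms(3)
proof (induction "card S" arbitrary: u S rule: less_induct)
  case less
  note sol = less.prems
  have u: "u \<in> S" "isOr u" and "S \<subseteq> G" using sol by (auto simp: partial_sol_iff)
  then have "finite S" using assms(1) finite_subset by blast
  obtain w where "{w' \<in> S. gedge P u w'} = {w}" using partial_sol_unique_child[OF sol u] by blast
  then have w: "w \<in> S" "gedge P u w" by auto
  then have Uu: "U u \<le> orval P G U u" using bellman u \<open>S \<subseteq> G\<close> by blast
  consider "w = termch u" | "isAnd w" using gedge_from_Or(2)[OF w(2) u(2)] by blast
  then show ?case
  proof cases
    case 1
    then have "S = {u, termch u}" using partial_sol_terminal[OF sol] w by simp
    moreover have "samples u \<noteq> {}" using gedge_samples_depth(2)[OF w(2)] 1 u(2) by (cases u) auto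
    ultimately have "solcost P S = cost P u (termch u)" using solcost_leaf u(2) by simp
    then show ?thesis using Uu orval_le_cost_termch order_trans by metis
  next
    case 2
    let ?S0 = "subsolution P S (child0 P w)" and ?S1 = "subsolution P S (child1 P w)"
    have S: "S = {u, w} \<union> ?S0 \<union> ?S1" and sol0: "partial_sol P G (child0 P w) ?S0"
      and sol1: "partial_sol P G (child1 P w) ?S1"
      using partial_sol_split[OF sol w 2] by blast+
    have "u \<notin> ?S0 \<union> ?S1" using join_parts_disjoint(2)[OF w(2) 2 sol0 sol1] .
    then have "card ?S0 < card S" "card ?S1 < card S"
      using u(1) \<open>finite S\<close> by (auto intro!: psubset_card_mono simp: subsolution_def)
    then have IH: "U (child0 P w) \<le> solcost P ?S0" "U (child1 P w) \<le> solcost P ?S1"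
      using less.hyps sol0 sol1 by blast+
    have "U u \<le> cost P u w + aval P U w"
      using Uu orval_le_cost_And[of w P G u U] w 2 \<open>S \<subseteq> G\<close> by (auto simp: andch_iff)
    also have "\<dots> = cost P u w + U (child0 P w) + U (child1 P w)"
      by (simp add: aval_And[OF 2] add.assoc)
    also have "\<dots> \<le> cost P u w + solcost P ?S0 + solcost P ?S1"
      using IH by (intro add_mono) auto
    also have "\<dots> = solcost P S"
      using solcost_join[OF w(2) 2 sol0 sol1 assms(1)] S by simp
    finally show ?thesis .
  qed
qed

definition expansion_closed :: "inst \<Rightarrow> node set \<Rightarrow> node set \<Rightarrow> bool" where
  "expansion_closed P G E \<longleftrightarrow> finite G \<and> E \<subseteq> G \<and>
     (\<forall>v w. isOr v \<longrightarrow> gedge P v w \<longrightarrow> w \<in> G \<longrightarrow> v \<in> E) \<and>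
     (\<forall>v\<in>E. \<forall>w. gedge P v w \<longrightarrow> w \<in> G) \<and>
     (\<forall>a\<in>G. isAnd a \<longrightarrow> child0 P a \<in> G \<and> child1 P a \<in> G)"

definition ub_consistent :: "inst \<Rightarrow> node set \<Rightarrow> node set \<Rightarrow> (node \<Rightarrow> ereal) \<Rightarrow> bool" where
  "ub_consistent P G E U \<longleftrightarrow> (\<forall>v. v \<notin> E \<longrightarrow> U v = \<infinity>) \<and> (\<forall>v\<in>E. U v = orval P G U v)"

lemma partial_sol_root_expanded:
  assumes "expansion_closed P G E" "partial_sol P G u S"
  shows "u \<in> E" "samples u \<noteq> {}"
proof -
  have "u \<in> S" "isOr u" using assms(2) by (auto simp: partial_sol_iff)
  then obtain w where "{w' \<in> S. gedge P u w'} = {w}"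
    using partial_sol_unique_child[OF assms(2)] by blast
  then have "w \<in> G" "gedge P u w" using assms(2) by (auto simp: partial_sol_iff)
  then show "u \<in> E" "samples u \<noteq> {}"
    using assms(1) \<open>isOr u\<close> gedge_samples_depth(1,2)[of P u w] by (auto simp: expansion_closed_def)
qed

lemma ub_consistent_le_solcost:
  assumes "expansion_closed P G E" "ub_consistent P G E U" "partial_sol P G u S"
  shows "U u \<le> solcost P S"
proof (rule bellman_le_solcost[OF _ _ assms(3)])
  show "finite G" using assms(1) by (simp add: expansion_closed_def)
  show "U v \<le> orval P G U v" if "isOr v" "gedge P v w" "w \<in> G" for v w
    using assms(1,2) that by (simp add: expansion_closed_def ub_consistent_def)
qed

lemma orval_eq_min_bestand: "orval P (Gp s) (UB s) u = min (bestand P s u) (cost P u (termch u))"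
  by (simp add: orval_def bestand_def)

lemma getSol_partial_sol:
  assumes closed: "expansion_closed P (Gp s) (Ex s)" and ub: "ub_consistent P (Gp s) (Ex s) (UB s)"
  shows "getSol P s u S \<Longrightarrow> u \<in> Ex s \<Longrightarrow> samples u \<noteq> {} \<Longrightarrow>
    partial_sol P (Gp s) u S \<and> solcost P S = UB s u"
proof (induction rule: getSol.induct)
  case (leaf u)
  obtain I d where "u = OrN I d" "I \<noteq> {}" using leaf.prems leaf.hyps(1) by (cases u) auto
  then have "gedge P u (termch u)" by simp
  then have G: "u \<in> Gp s" "termch u \<in> Gp s" using closed leaf.prems(1) by (auto simp: expansion_closed_def)
  have "UB s u = min (bestand P s u) (cost P u (termch u))"
    using ub leaf.prems(1) orval_eq_min_bestand by (simp add: ub_consistent_def)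
  also have "\<dots> = cost P u (termch u)"
    using leaf.hyps(2) by (auto simp: bestand_def min_def top_unique)
  finally show ?case
    using partial_sol_leaf[OF G leaf.hyps(1) leaf.prems(2)] solcost_leaf[OF leaf.hyps(1) leaf.prems(2)]
    by simp
next
  case (inner u a S0 S1)
  have a: "isAnd a" "gedge P u a" "a \<in> Gp s" using inner.hyps(3) by (auto simp: andch_iff)
  have "UB s u = min (bestand P s u) (cost P u (termch u))"
    using ub inner.prems(1) orval_eq_min_bestand by (simp add: ub_consistent_def)
  also have "\<dots> = bestand P s u" using inner.hyps(2) by (auto simp: min_def)
  also have "\<dots> = cost P u a + UB s (child0 P a) + UB s (child1 P a)"
    using inner.hyps(4) by (simp add: aval_And[OF a(1)] add.assoc)
  finally have Uu: "UB s u = cost P u a + UB s (child0 P a) + UB s (child1 P a)" .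
  have "bestand P s u < \<infinity>" using inner.hyps(2) by (auto simp: top_unique)
  then have "UB s (child0 P a) \<noteq> \<infinity>" "UB s (child1 P a) \<noteq> \<infinity>"
    using inner.hyps(4) by (auto simp: aval_And[OF a(1)])
  then have "child0 P a \<in> Ex s" "child1 P a \<in> Ex s" using ub by (auto simp: ub_consistent_def)
  then have sol0: "partial_sol P (Gp s) (child0 P a) S0" and cost0: "solcost P S0 = UB s (child0 P a)"
    and sol1: "partial_sol P (Gp s) (child1 P a) S1" and cost1: "solcost P S1 = UB s (child1 P a)"
    using inner.IH samples_And_children(1,2)[OF a(2,1)] by blast+
  have "u \<in> Gp s" "finite (Gp s)" using closed inner.prems(1) by (auto simp: expansion_closed_def)
  then show ?case
    using partial_sol_join[OF a(2,1) sol0 sol1] solcost_join[OF a(2,1) sol0 sol1] cost0 cost1 a(3) Uu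
    by simp
qed

lemma getSol_exists:
  assumes "finite (Gp s)"
  shows "isOr u \<Longrightarrow> \<exists>S. getSol P s u S"
proof (induction "nF P - depth u" arbitrary: u rule: less_induct)
  case less
  show ?case
  proof (cases "andch P (Gp s) u = {} \<or> cost P u (termch u) \<le> bestand P s u")
    case True
    then show ?thesis using getSol.leaf[OF less.prems] by blast
  next
    case False
    let ?f = "\<lambda>a. cost P u a + aval P (UB s) a"
    have "finite (andch P (Gp s) u)" "andch P (Gp s) u \<noteq> {}"
      using assms False by (simp_all add: andch_def)
    then have "Inf (?f ` andch P (Gp s) u) \<in> ?f ` andch P (Gp s) u" by (simp add: cInf_eq_Min)
    then obtain a where a: "a \<in> andch P (Gp s) u" "?f a = bestand P s u"
      unfolding bestand_def by (auto simp: Setcompr_eq_image)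
    then have "isAnd a" "gedge P u a" by (auto simp: andch_iff)
    then have "depth u < nF P" "isOr (child0 P a)" "isOr (child1 P a)"
      "depth (child0 P a) = Suc (depth u)" "depth (child1 P a) = Suc (depth u)"
      using gedge_to_And(3) gedge_And_children(3,4) depth_And_children by blast+
    then obtain S0 S1 where "getSol P s (child0 P a) S0" "getSol P s (child1 P a) S1"
      using less.hyps by (metis diff_less_mono2 lessI)
    then show ?thesis using getSol.inner[OF less.prems False a] by blast
  qed
qed

section \<open>The main loop\<close>

fun ub_queue_invariant :: "inst \<Rightarrow> node set \<Rightarrow> node set \<Rightarrow> (node \<Rightarrow> ereal) \<times> node set \<Rightarrow> bool" where
  "ub_queue_invariant P G E (U, Q) \<longleftrightarrow> Q \<subseteq> E \<and> (\<forall>v. v \<notin> E \<longrightarrow> U v = \<infinity>) \<and>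
     (\<forall>v\<in>E. orval P G U v \<le> U v) \<and> (\<forall>v\<in>E - Q. U v = orval P G U v)"

lemma not_parents_self: "u \<notin> parents P G u"
proof
  assume "u \<in> parents P G u"
  then obtain a where "isAnd a" "gedge P u a" "gedge P a u" by (auto simp: parents_def)
  then have "depth u = Suc (depth u)" using depth_And_children gedge_from_And by metis
  then show False by simp
qed

lemma orval_fun_upd_nonparent:
  assumes "w \<in> G" "w \<notin> parents P G u"
  shows "orval P G (L(u := c)) w = orval P G L w"
proof (rule orval_cong[symmetric])
  fix a assume "a \<in> andch P G w"
  then have "a \<in> G" "isAnd a" "gedge P w a" by (auto simp: andch_iff)
  then have "child0 P a \<noteq> u" "child1 P a \<noteq> u"
    using assms gedge_to_And(1)[OF \<open>gedge P w a\<close>] gedge_And_children(1,2)[OF \<open>gedge P w a\<close>]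
    by (auto simp: parents_def)
  then show "L (child0 P a) = (L(u := c)) (child0 P a) \<and> L (child1 P a) = (L(u := c)) (child1 P a)"
    by simp
qed

lemma prop_step_ub_queue_invariant:
  assumes "E \<subseteq> G" and parents: "\<And>u. parents P G u \<subseteq> E"
    and "prop_step P G (\<lambda>v old. v < old) UQ UQ'" and "ub_queue_invariant P G E UQ"
  shows "ub_queue_invariant P G E UQ'"
  using assms(3)
proof cases
  case (upd u Q v L)
  let ?L = "L(u := v)"
  have inv: "Q \<subseteq> E" "\<forall>v. v \<notin> E \<longrightarrow> L v = \<infinity>" "\<forall>v\<in>E. orval P G L v \<le> L v"
    "\<forall>v\<in>E - Q. L v = orval P G L v"
    using assms(4) upd(1) by auto
  then have "u \<in> E" using upd(3) by blast
  then have self: "orval P G ?L u = v"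
    using orval_fun_upd_nonparent[OF _ not_parents_self] upd(5) assms(1) by auto
  show ?thesis unfolding upd(2) ub_queue_invariant.simps
  proof (intro conjI ballI allI impI)
    show "Q - {u} \<union> parents P G u \<subseteq> E" using inv(1) parents by blast
    show "?L w = \<infinity>" if "w \<notin> E" for w using inv(2) that \<open>u \<in> E\<close> by auto
    show "orval P G ?L w \<le> ?L w" if "w \<in> E" for w
    proof (cases "w = u")
      case False
      have "orval P G ?L w \<le> orval P G L w" using upd(6) by (intro orval_mono) auto
      also have "\<dots> \<le> L w" using inv(3) that by blast
      finally show ?thesis using False by simp
    qed (simp add: self)
    show "?L w = orval P G ?L w" if "w \<in> E - (Q - {u} \<union> parents P G u)" for w
    proof (cases "w = u")
      case False
      then have "orval P G ?L w = orval P G L w"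
        using orval_fun_upd_nonparent that assms(1) by blast
      then show ?thesis using inv(4) that False by simp
    qed (simp add: self)
  qed
next
  case (noupd u Q v L)
  then show ?thesis using assms(4) by (auto intro: antisym)
qed

lemma prop_steps_ub_queue_invariant:
  assumes "E \<subseteq> G" "\<And>u. parents P G u \<subseteq> E"
    and "(prop_step P G (\<lambda>v old. v < old))\<^sup>*\<^sup>* UQ UQ'" "ub_queue_invariant P G E UQ"
  shows "ub_queue_invariant P G E UQ'"
  using assms(3,4) by induction (auto intro: prop_step_ub_queue_invariant[OF assms(1,2)])

lemma expansion_closed_parents:
  "expansion_closed P G E \<Longrightarrow> parents P G u \<subseteq> E"
  by (auto simp: expansion_closed_def parents_def)

definition maptree_invariant :: "inst \<Rightarrow> state \<Rightarrow> bool" where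
  "maptree_invariant P s \<longleftrightarrow> root P \<in> Gp s \<and>
     expansion_closed P (Gp s) (Ex s) \<and> ub_consistent P (Gp s) (Ex s) (UB s)"

lemma maptree_invariant_init: "maptree_invariant P (init P)"
proof -
  have "\<not> gedge P v (root P)" if "isOr v" for v
    using that by (cases v) (auto simp: root_def)
  then show ?thesis
    by (auto simp: maptree_invariant_def expansion_closed_def ub_consistent_def init_def root_def)
qed

lemma sel_unexpanded:
  assumes "expansion_closed P (Gp s) (Ex s)"
  shows "sel P s y x \<Longrightarrow> y \<in> Gp s \<Longrightarrow> isOr y \<Longrightarrow> x \<in> Gp s \<and> isOr x \<and> x \<notin> Ex s"
proof (induction rule: sel.induct)
  case (descend x a x'' x')
  then have "a \<in> Gp s" "isAnd a" "gedge P x a" by (auto simp: andch_iff)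
  then have "x'' \<in> Gp s" "isOr x''"
    using assms descend(4) gedge_And_children(3,4)[OF \<open>gedge P x a\<close>] by (auto simp: expansion_closed_def)
  then show ?case using descend.IH by blast
qed simp

lemma newor_isOr: "c \<in> newor P x \<Longrightarrow> isOr c"
  by (auto simp: newor_def elim!: isAnd.elims)

lemma finite_And_children: "finite {a. isAnd a \<and> gedge P x a}"
proof (rule finite_subset)
  show "{a. isAnd a \<and> gedge P x a} \<subseteq> (\<lambda>f. AndN (samples x) (depth x) f) ` {1..nF P}"
    by (cases x) (auto elim!: isAnd.elims simp: Vs_def)
qed simp

lemma finite_newor: "finite (newor P x)"
proof (rule finite_subset)
  show "newor P x \<subseteq> child0 P ` {a. isAnd a \<and> gedge P x a} \<union> child1 P ` {a. isAnd a \<and> gedge P x a}"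
    by (auto simp: newor_def)
qed (simp add: finite_And_children)

lemma Or_parent_expand:
  assumes closed: "expansion_closed P (Gp s) (Ex s)" and "isOr x"
    and v: "isOr v" "gedge P v w" "w \<in> Gp (expand P s x)"
  shows "v \<in> Ex (expand P s x)"
proof -
  have vw: "v = OrN (samples w) (depth w)" "\<not> isOr w"
    using gedge_from_Or[OF v(2,1)] v(1) by (cases w; auto)+
  consider "w \<in> Gp s" | "w = termch x" | "w \<in> {a. isAnd a \<and> gedge P x a}" | "w \<in> newor P x"
    using v(3) by (auto simp: expand_def)
  then show ?thesis
  proof cases
    case 1 then show ?thesis using v closed by (auto simp: expansion_closed_def expand_def)
  next
    case 2 then show ?thesis using vw \<open>isOr x\<close> by (cases x) (auto simp: expand_def)
  next
    case 3 then show ?thesis using vw gedge_from_Or(1)[of P x w] \<open>isOr x\<close> by (simp add: expand_def)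
  next
    case 4 then show ?thesis using vw newor_isOr by blast
  qed
qed

lemma expansion_closed_expand:
  assumes closed: "expansion_closed P (Gp s) (Ex s)" and x: "x \<in> Gp s" "isOr x"
  shows "expansion_closed P (Gp (expand P s x)) (Ex (expand P s x))"
proof -
  let ?A = "{a. isAnd a \<and> gedge P x a}"
  let ?G = "Gp s \<union> {termch x} \<union> ?A \<union> newor P x"
  obtain I d where xI: "x = OrN I d" using x(2) by (cases x) auto
  have G: "Gp (expand P s x) = ?G" "Ex (expand P s x) = insert x (Ex s)"
    by (simp_all add: expand_def)
  have "v \<in> insert x (Ex s)" if "isOr v" "gedge P v w" "w \<in> ?G" for v w
    using Or_parent_expand[OF closed x(2) that[folded G(1)]] G(2) by simp
  moreover have "w \<in> ?G" if "v \<in> insert x (Ex s)" "gedge P v w" for v w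
  proof (cases "v = x")
    case True then show ?thesis using gedge_from_Or(2)[of P x w] that(2) x(2) by blast
  next
    case False then show ?thesis using that closed unfolding expansion_closed_def by blast
  qed
  moreover have "child0 P a \<in> ?G \<and> child1 P a \<in> ?G" if a: "a \<in> ?G" "isAnd a" for a
  proof -
    have "a \<noteq> termch x" using a(2) xI by auto
    moreover have "a \<notin> newor P x" using a(2) newor_isOr[of a P x] by (cases a) auto
    ultimately
    consider "a \<in> Gp s" | "a \<in> ?A" using a(1) by blast
    then show ?thesis
    proof cases
      case 1 then show ?thesis using a(2) closed by (simp add: expansion_closed_def)
    next
      case 2 then show ?thesis by (auto simp: newor_def)
    qed
  qed
  moreover have "finite ?G" "insert x (Ex s) \<subseteq> ?G"
    using closed x(1) finite_And_children[of P x] finite_newor[of P x]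
    unfolding expansion_closed_def by blast+
  ultimately show ?thesis unfolding expansion_closed_def G by presburger
qed

lemma ub_queue_invariant_expand:
  assumes closed: "expansion_closed P (Gp s) (Ex s)" and ub: "ub_consistent P (Gp s) (Ex s) (UB s)"
    and "x \<notin> Ex s"
  shows "ub_queue_invariant P (Gp (expand P s x)) (Ex (expand P s x)) (UB (expand P s x), {x})"
proof -
  have "andch P (Gp (expand P s x)) v = andch P (Gp s) v" if "v \<in> Ex s" for v
    using closed that by (auto simp: andch_def expand_def expansion_closed_def)
  then have "orval P (Gp (expand P s x)) L v = orval P (Gp s) L v" if "v \<in> Ex s" for v L
    using that by (simp add: orval_def)
  then show ?thesis
    using ub assms(3) by (auto simp: ub_consistent_def expand_def)
qed

lemma maptree_invariant_iter:
  assumes inv: "maptree_invariant P s" and "iter P s s'"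
  shows "maptree_invariant P s'"
  using assms(2)
proof cases
  case (1 x s1 L2 U2)
  have closed: "expansion_closed P (Gp s) (Ex s)" and ub: "ub_consistent P (Gp s) (Ex s) (UB s)"
    and "root P \<in> Gp s" using inv by (auto simp: maptree_invariant_def)
  then have x: "x \<in> Gp s" "isOr x" "x \<notin> Ex s"
    using sel_unexpanded[OF closed 1(3)] by (auto simp: root_def)
  have closed1: "expansion_closed P (Gp s1) (Ex s1)"
    using expansion_closed_expand[OF closed x(1,2)] 1(4) by simp
  have "ub_queue_invariant P (Gp s1) (Ex s1) (U2, {})"
    using prop_steps_ub_queue_invariant[OF _ expansion_closed_parents[OF closed1] 1(6)]
      ub_queue_invariant_expand[OF closed ub x(3)] closed1 1(4)
    by (auto simp: expansion_closed_def)
  then have "ub_consistent P (Gp s1) (Ex s1) U2" by (auto simp: ub_consistent_def)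
  moreover have "root P \<in> Gp s1" using \<open>root P \<in> Gp s\<close> 1(4) by (simp add: expand_def)
  ultimately show ?thesis using 1(1) closed1 by (simp add: maptree_invariant_def)
qed

lemma maptree_invariant_reachable: "(iter P)\<^sup>*\<^sup>* (init P) s \<Longrightarrow> maptree_invariant P s"
  by (induction rule: rtranclp_induct) (auto intro: maptree_invariant_init maptree_invariant_iter)

theorem lemma17:
  fixes P :: inst and s :: state and u :: node
  assumes "valid_inst P"
    and "(iter P)\<^sup>+\<^sup>+ (init P) s"
    and "u \<in> Gp s" and "isOr u"
    and "\<exists>S. partial_sol P (Gp s) u S"
  shows "(\<exists>S. getSol P s u S) \<and>
         (\<forall>S. getSol P s u S \<longrightarrow>
              partial_sol P (Gp s) u S \<and>
              (\<forall>S'. partial_sol P (Gp s) u S' \<longrightarrow> solcost P S \<le> solcost P S'))"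
proof -
  have closed: "expansion_closed P (Gp s) (Ex s)" and ub: "ub_consistent P (Gp s) (Ex s) (UB s)"
    using maptree_invariant_reachable[OF tranclp_into_rtranclp[OF assms(2)]]
    by (auto simp: maptree_invariant_def)
  obtain S0 where "partial_sol P (Gp s) u S0" using assms(5) by blast
  then have u: "u \<in> Ex s" "samples u \<noteq> {}" using partial_sol_root_expanded[OF closed] by blast+
  show ?thesis
  proof (intro conjI allI impI)
    show "\<exists>S. getSol P s u S"
      using getSol_exists closed assms(4) by (simp add: expansion_closed_def)
    fix S assume "getSol P s u S"
    then have "partial_sol P (Gp s) u S" "solcost P S = UB s u"
      using getSol_partial_sol[OF closed ub _ u] by blast+
    then show "partial_sol P (Gp s) u S" by blast
    show "solcost P S \<le> solcost P S'" if "partial_sol P (Gp s) u S'" for S'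
      using ub_consistent_le_solcost[OF closed ub that] \<open>solcost P S = UB s u\<close> by simp
  qed
qed

end
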